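(* Let $G$ be a finitely generated group hyperbolic relative to a finite collection $\mathcal P$, $S$ a finite generating set, and $(\epsilon,R,D)$ thin-triangle constants. Let $U\subset V\cup W$ be a finite subset that is $6D$-convex with respect to some $b\in U$. Then for every $n\ge 7D$, the subgraph of the $n$-Rips graph $\Gamma_n$ induced on $U$ is dismantlable.
   Context: $\Gamma$ is the Cayley graph of $G$ w.r.t. $S$, $V=G$, $W$ the set of cosets $gP_\lambda$; relative hyperbolicity means the coned-off Cayley graph (vertex set $V\cup W$, edges of $\Gamma$ plus edges $(v,w)$ for $v\in w$) is fine and $\delta$-hyperbolic. $|\cdot,\cdot|_S$ is extended to $V\cup W$ via distances in $\Gamma$ between corresponding elements/cosets. $\Gamma_n$ has vertex set $V\cup W$ and an edge between $u\ne u'$ whenever $|u,u'|_S\le n$. For a geodesic edge-path $p=(p_j)_{j=0}^\ell$ in $\Gamma$, $p_i$ is $(\epsilon,R)$-deep in $w\in W$ if $R\le i\le\ell-R$ and $|p_j,w|_S\le\epsilon$ for all $|j-i|\le R$. A geodesic from $a$ to $b$ ($a,b\in V\cup W$) is a geodesic in $\Gamma$ of length $|a,b|_S$ starting at $a$ (if $a\in V$) or in $a$ (if $a\in W$), ending analogously at $b$; for $i>\ell$, $p_i:=p_\ell$. Positive integers $(\epsilon,R,D)$ are thin-triangle constants if: $D\ge\epsilon$; no vertex of a geodesic in $\Gamma$ is $(\epsilon,R)$-deep in two distinct cosets; and for all $a,b,c\in V\cup W$ with $a\ne b$, geodesics $p^{ab},p^{bc},p^{ac}$, $\ell=|a,b|_S$,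 $0\le i\le\ell$, with $z=w$ if $p^{ab}_i$ is $(\epsilon,R)$-deep in $w$ and $z=p^{ab}_i$ otherwise, we have $|z,p^{ac}_i|_S\le D$ or $|z,p^{bc}_{\ell-i}|_S\le D$. A subset $U\subset V\cup W$ is $\nu$-convex with respect to $u\in U$ if for every $u'\in U$, every geodesic $(p_j)_{j=0}^\ell$ from $u$ to $u'$ in $\Gamma$ and every $j\le\ell-\nu$: $p_j\in U$, and every $w\in W$ with $|w,p_j|_S\le\epsilon$ lies in $U$. In a graph, a vertex $a$ is dominated by an adjacent vertex $z\ne a$ if every vertex adjacent to $a$ is also adjacent to $z$. A finite graph is dismantlable if its vertices can be ordered $a_1,\ldots,a_k$ so that for each $i<k$, $a_i$ is dominated in the subgraph induced on $\{a_i,\ldots,a_k\}$. *)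

theory Defs
  imports "HOL-Algebra.Algebra"
begin

definition walk :: "('v \<Rightarrow> 'v \<Rightarrow> bool) \<Rightarrow> (nat \<Rightarrow> 'v) \<Rightarrow> nat \<Rightarrow> bool" where
  "walk E p n \<longleftrightarrow> (\<forall>i<n. E (p i) (p (Suc i)))"

definition gdist :: "('v \<Rightarrow> 'v \<Rightarrow> bool) \<Rightarrow> 'v \<Rightarrow> 'v \<Rightarrow> nat" where
  "gdist E x y = (LEAST n. \<exists>p. walk E p n \<and> p 0 = x \<and> p n = y)"

definition ggeod :: "('v \<Rightarrow> 'v \<Rightarrow> bool) \<Rightarrow> (nat \<Rightarrow> 'v) \<Rightarrow> nat \<Rightarrow> bool" where
  "ggeod E p n \<longleftrightarrow> walk E p n \<and> gdist E (p 0) (p n) = n"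

definition circuit :: "'v set \<Rightarrow> ('v \<Rightarrow> 'v \<Rightarrow> bool) \<Rightarrow> 'v list \<Rightarrow> bool" where
  "circuit V E c \<longleftrightarrow> length c \<ge> 3 \<and> distinct c \<and> set c \<subseteq> V \<and>
     (\<forall>i<length c. E (c ! i) (c ! ((i + 1) mod length c)))"

definition edge_in :: "'v \<Rightarrow> 'v \<Rightarrow> 'v list \<Rightarrow> bool" where
  "edge_in u v c \<longleftrightarrow> (\<exists>i<length c. {c ! i, c ! ((i + 1) mod length c)} = {u, v})"

definition fine_graph :: "'v set \<Rightarrow> ('v \<Rightarrow> 'v \<Rightarrow> bool) \<Rightarrow> bool" where
  "fine_graph V E \<longleftrightarrow> (\<forall>u\<in>V. \<forall>v\<in>V. E u v \<longrightarrow>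
      (\<forall>n. finite {c. circuit V E c \<and> length c = n \<and> edge_in u v c}))"

definition hyperbolic_graph :: "'v set \<Rightarrow> ('v \<Rightarrow> 'v \<Rightarrow> bool) \<Rightarrow> nat \<Rightarrow> bool" where
  "hyperbolic_graph V E \<delta> \<longleftrightarrow>
     (\<forall>x\<in>V. \<forall>y\<in>V. \<exists>p n. walk E p n \<and> p 0 = x \<and> p n = y) \<and>
     (\<forall>p q r l m k. ggeod E p l \<and> ggeod E q m \<and> ggeod E r k \<and>
        p 0 \<in> V \<and> q 0 = p l \<and> r 0 = p 0 \<and> r k = q m \<longrightarrow>
        (\<forall>i\<le>l. \<exists>j. (j \<le> m \<and> gdist E (p i) (q j) \<le> \<delta>) \<or> (j \<le> k \<and> gdist E (p i) (r j) \<le> \<delta>)))"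

definition dominated_in :: "'v set \<Rightarrow> ('v \<Rightarrow> 'v \<Rightarrow> bool) \<Rightarrow> 'v \<Rightarrow> bool" where
  "dominated_in A E a \<longleftrightarrow> (\<exists>z\<in>A. z \<noteq> a \<and> E a z \<and>
      (\<forall>x\<in>A. E a x \<and> x \<noteq> z \<longrightarrow> E z x))"

definition dismantlable :: "'v set \<Rightarrow> ('v \<Rightarrow> 'v \<Rightarrow> bool) \<Rightarrow> bool" where
  "dismantlable U E \<longleftrightarrow> finite U \<and> (\<exists>xs. distinct xs \<and> set xs = U \<and>
      (\<forall>i. i + 1 < length xs \<longrightarrow> dominated_in (set (drop i xs)) E (xs ! i)))"

definition cay_adj :: "('a, 'b) monoid_scheme \<Rightarrow> 'a set \<Rightarrow> 'a \<Rightarrow> 'a \<Rightarrow> bool" where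
  "cay_adj G S g h \<longleftrightarrow> g \<in> carrier G \<and> h \<in> carrier G \<and> g \<noteq> h \<and>
     (\<exists>s\<in>S. h = g \<otimes>\<^bsub>G\<^esub> s \<or> g = h \<otimes>\<^bsub>G\<^esub> s)"

definition wdist :: "('a, 'b) monoid_scheme \<Rightarrow> 'a set \<Rightarrow> 'a \<Rightarrow> 'a \<Rightarrow> nat" where
  "wdist G S = gdist (cay_adj G S)"

definition cosetsW :: "('a, 'b) monoid_scheme \<Rightarrow> 'a set set \<Rightarrow> 'a set set" where
  "cosetsW G Ps = {g <#\<^bsub>G\<^esub> H | g H. g \<in> carrier G \<and> H \<in> Ps}"

text \<open>V \<union> W, with V = G (Inl) and W (Inr)\<close>
definition VW :: "('a, 'b) monoid_scheme \<Rightarrow> 'a set set \<Rightarrow> ('a + 'a set) set" where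
  "VW G Ps = Inl ` carrier G \<union> Inr ` cosetsW G Ps"

fun elts :: "'a + 'a set \<Rightarrow> 'a set" where
  "elts (Inl g) = {g}"
| "elts (Inr w) = w"

definition xdist :: "('a, 'b) monoid_scheme \<Rightarrow> 'a set \<Rightarrow> 'a + 'a set \<Rightarrow> 'a + 'a set \<Rightarrow> nat" where
  "xdist G S u u' = (INF gh \<in> elts u \<times> elts u'. wdist G S (fst gh) (snd gh))"

definition coned_adj :: "('a, 'b) monoid_scheme \<Rightarrow> 'a set \<Rightarrow> 'a set set \<Rightarrow> 'a + 'a set \<Rightarrow> 'a + 'a set \<Rightarrow> bool" where
  "coned_adj G S Ps u v \<longleftrightarrow>
     (\<exists>g h. u = Inl g \<and> v = Inl h \<and> cay_adj G S g h) \<or>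
     (\<exists>g w. w \<in> cosetsW G Ps \<and> g \<in> carrier G \<and> g \<in> w \<and>
        ((u = Inl g \<and> v = Inr w) \<or> (u = Inr w \<and> v = Inl g)))"

definition rel_hyperbolic :: "('a, 'b) monoid_scheme \<Rightarrow> 'a set \<Rightarrow> 'a set set \<Rightarrow> bool" where
  "rel_hyperbolic G S Ps \<longleftrightarrow> fine_graph (VW G Ps) (coned_adj G S Ps) \<and>
     (\<exists>\<delta>. hyperbolic_graph (VW G Ps) (coned_adj G S Ps) \<delta>)"

definition cgeod :: "('a, 'b) monoid_scheme \<Rightarrow> 'a set \<Rightarrow> (nat \<Rightarrow> 'a) \<Rightarrow> nat \<Rightarrow> bool" where
  "cgeod G S p l \<longleftrightarrow> walk (cay_adj G S) p l \<and> p 0 \<in> carrier G \<and>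
     wdist G S (p 0) (p l) = l \<and> (\<forall>i\<ge>l. p i = p l)"

definition geod_from_to :: "('a, 'b) monoid_scheme \<Rightarrow> 'a set \<Rightarrow> 'a + 'a set \<Rightarrow> 'a + 'a set \<Rightarrow> (nat \<Rightarrow> 'a) \<Rightarrow> nat \<Rightarrow> bool" where
  "geod_from_to G S a b p l \<longleftrightarrow> cgeod G S p l \<and> l = xdist G S a b \<and>
     p 0 \<in> elts a \<and> p l \<in> elts b"

definition deep :: "('a, 'b) monoid_scheme \<Rightarrow> 'a set \<Rightarrow> nat \<Rightarrow> nat \<Rightarrow> (nat \<Rightarrow> 'a) \<Rightarrow> nat \<Rightarrow> nat \<Rightarrow> 'a set \<Rightarrow> bool" where
  "deep G S \<epsilon> R p l i w \<longleftrightarrow> R \<le> i \<and> i + R \<le> l \<and>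
     (\<forall>j. i \<le> j + R \<and> j \<le> i + R \<longrightarrow> xdist G S (Inl (p j)) (Inr w) \<le> \<epsilon>)"

definition thin_triangle_constants :: "('a, 'b) monoid_scheme \<Rightarrow> 'a set \<Rightarrow> 'a set set \<Rightarrow> nat \<Rightarrow> nat \<Rightarrow> nat \<Rightarrow> bool" where
  "thin_triangle_constants G S Ps \<epsilon> R D \<longleftrightarrow>
     0 < \<epsilon> \<and> 0 < R \<and> 0 < D \<and> \<epsilon> \<le> D \<and>
     (\<forall>p l i w1 w2. cgeod G S p l \<and> w1 \<in> cosetsW G Ps \<and> w2 \<in> cosetsW G Ps \<and>
        deep G S \<epsilon> R p l i w1 \<and> deep G S \<epsilon> R p l i w2 \<longrightarrow> w1 = w2) \<and>
     (\<forall>a\<in>VW G Ps. \<forall>b\<in>VW G Ps. \<forall>c\<in>VW G Ps. \<forall>pab pbc pac lab lbc lac.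
        a \<noteq> b \<and> geod_from_to G S a b pab lab \<and> geod_from_to G S b c pbc lbc \<and>
        geod_from_to G S a c pac lac \<longrightarrow>
        (\<forall>i\<le>lab.
          (\<forall>w\<in>cosetsW G Ps. deep G S \<epsilon> R pab lab i w \<longrightarrow>
             xdist G S (Inr w) (Inl (pac i)) \<le> D \<or> xdist G S (Inr w) (Inl (pbc (lab - i))) \<le> D) \<and>
          ((\<nexists>w. w \<in> cosetsW G Ps \<and> deep G S \<epsilon> R pab lab i w) \<longrightarrow>
             xdist G S (Inl (pab i)) (Inl (pac i)) \<le> D \<or>
             xdist G S (Inl (pab i)) (Inl (pbc (lab - i))) \<le> D)))"

definition convex_wrt :: "('a, 'b) monoid_scheme \<Rightarrow> 'a set \<Rightarrow> 'a set set \<Rightarrow> nat \<Rightarrow> nat \<Rightarrow> ('a + 'a set) set \<Rightarrow> 'a + 'a set \<Rightarrow> bool" where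
  "convex_wrt G S Ps \<epsilon> \<nu> U u \<longleftrightarrow> u \<in> U \<and>
     (\<forall>u'\<in>U. \<forall>p l. geod_from_to G S u u' p l \<longrightarrow>
        (\<forall>j. j + \<nu> \<le> l \<longrightarrow> Inl (p j) \<in> U \<and>
           (\<forall>w\<in>cosetsW G Ps. xdist G S (Inr w) (Inl (p j)) \<le> \<epsilon> \<longrightarrow> Inr w \<in> U)))"

definition rips_adj :: "('a, 'b) monoid_scheme \<Rightarrow> 'a set \<Rightarrow> nat \<Rightarrow> 'a + 'a set \<Rightarrow> 'a + 'a set \<Rightarrow> bool" where
  "rips_adj G S n u u' \<longleftrightarrow> u \<noteq> u' \<and> xdist G S u u' \<le> n"

end

theory Submission
  imports Defs
begin

text \<open>Order \<open>U\<close> by decreasing distance from \<open>b\<close> and remove a farthest vertex \<open>u\<close> at each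
  step; convexity of \<open>U\<close> with respect to \<open>b\<close> survives the removal. If \<open>|b,u|_S \<le> n\<close>, then \<open>b\<close>
  dominates \<open>u\<close>. Otherwise let \<open>z\<close> be the vertex of a geodesic from \<open>u\<close> to \<open>b\<close> at distance \<open>6D\<close>
  from \<open>u\<close>, replaced by its coset if it is deep in one; by convexity it lies in \<open>U\<close>. For a
  neighbour \<open>x\<close> of \<open>u\<close>, the thin triangle \<open>u, b, x\<close> puts \<open>z\<close> within \<open>D\<close> of the geodesic from
  \<open>u\<close> to \<open>x\<close> at distance \<open>6D\<close> from \<open>u\<close>, or of the geodesic from \<open>b\<close> to \<open>x\<close> at distance
  \<open>|b,u|_S - 6D\<close> from \<open>b\<close>; since \<open>|u,x|_S \<le> n\<close> and \<open>|b,x|_S \<le> |b,u|_S\<close>, in both cases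
  \<open>|z,x|_S \<le> n\<close>, so \<open>z\<close> dominates \<open>u\<close>.\<close>

section \<open>Walks and graph distance\<close>

definition reachable :: "('v \<Rightarrow> 'v \<Rightarrow> bool) \<Rightarrow> 'v \<Rightarrow> 'v \<Rightarrow> bool" where
  "reachable E x y \<longleftrightarrow> (\<exists>p n. walk E p n \<and> p 0 = x \<and> p n = y)"

lemma walk_gdist_le: "walk E p n \<Longrightarrow> gdist E (p 0) (p n) \<le> n"
  unfolding gdist_def by (rule Least_le) blast

lemma walk_shift: "walk E p n \<Longrightarrow> j \<le> n \<Longrightarrow> walk E (\<lambda>k. p (i + k)) (j - i)"
  unfolding walk_def by auto

lemma walk_gdist_segment_le: "walk E p n \<Longrightarrow> i \<le> j \<Longrightarrow> j \<le> n \<Longrightarrow> gdist E (p i) (p j) \<le> j - i"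
  using walk_gdist_le[OF walk_shift, of E p n j i] by simp

lemma walk_reverse:
  assumes "symp E" "walk E p n"
  shows "walk E (\<lambda>k. p (n - k)) n"
  unfolding walk_def
proof (intro allI impI)
  fix i assume "i < n"
  then have "Suc (n - Suc i) = n - i" by simp
  moreover have "E (p (n - Suc i)) (p (Suc (n - Suc i)))"
    using assms(2) \<open>i < n\<close> unfolding walk_def by simp
  ultimately have "E (p (n - Suc i)) (p (n - i))" by simp
  then show "E (p (n - i)) (p (n - Suc i))" by (rule sympD[OF assms(1)])
qed

lemma walk_append:
  assumes "walk E p m" "walk E q k" "p m = q 0"
  shows "walk E (\<lambda>i. if i \<le> m then p i else q (i - m)) (m + k)"
  unfolding walk_def
proof (intro allI impI)
  fix i assume "i < m + k"
  then show "E (if i \<le> m then p i else q (i - m)) (if Suc i \<le> m then p (Suc i) else q (Suc i - m))"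
    using assms unfolding walk_def
    by (cases "i < m"; cases "i = m") (auto simp: Suc_diff_le)
qed

lemma reachable_refl: "reachable E x x"
  unfolding reachable_def by (intro exI[of _ "\<lambda>_. x"] exI[of _ 0]) (simp add: walk_def)

lemma reachable_edge: "E x y \<Longrightarrow> reachable E x y"
  unfolding reachable_def by (intro exI[of _ "\<lambda>i. if i = 0 then x else y"] exI[of _ 1]) (simp add: walk_def)

lemma reachable_trans:
  assumes "reachable E x y" "reachable E y z"
  shows "reachable E x z"
proof -
  obtain p m q k where "walk E p m" "p 0 = x" "p m = y" "walk E q k" "q 0 = y" "q k = z"
    using assms unfolding reachable_def by blast
  then show ?thesis
    unfolding reachable_def using walk_append[of E p m q k]
    by (intro exI[of _ "\<lambda>i. if i \<le> m then p i else q (i - m)"] exI[of _ "m + k"]) auto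
qed

lemma gdist_walk: "reachable E x y \<Longrightarrow> \<exists>p. walk E p (gdist E x y) \<and> p 0 = x \<and> p (gdist E x y) = y"
  unfolding gdist_def reachable_def by (rule LeastI_ex) blast

lemma gdist_refl: "gdist E x x = 0"
  using walk_gdist_le[of E "\<lambda>_. x" 0] by (simp add: walk_def)

lemma gdist_sym:
  assumes "symp E"
  shows "gdist E x y = gdist E y x"
proof -
  have "\<exists>p. walk E p n \<and> p 0 = y \<and> p n = x" if "walk E p n" "p 0 = x" "p n = y" for n p x y
    using walk_reverse[OF assms that(1)] that(2,3) by (intro exI[of _ "\<lambda>k. p (n - k)"]) simp
  then have "(\<exists>p. walk E p n \<and> p 0 = x \<and> p n = y) \<longleftrightarrow> (\<exists>p. walk E p n \<and> p 0 = y \<and> p n = x)" for n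
    by blast
  then show ?thesis unfolding gdist_def by simp
qed

lemma gdist_triangle:
  assumes "reachable E x y" "reachable E y z"
  shows "gdist E x z \<le> gdist E x y + gdist E y z"
proof -
  obtain p where p: "walk E p (gdist E x y)" "p 0 = x" "p (gdist E x y) = y"
    using gdist_walk[OF assms(1)] by blast
  obtain q where q: "walk E q (gdist E y z)" "q 0 = y" "q (gdist E y z) = z"
    using gdist_walk[OF assms(2)] by blast
  show ?thesis
    using walk_gdist_le[OF walk_append[OF p(1) q(1)]] p q by (simp split: if_splits)
qed

lemma dismantlable_singleton: "dismantlable {a} E"
  unfolding dismantlable_def by (intro conjI exI[of _ "[a]"]) simp_all

lemma dismantlable_remove_dominated:
  assumes "u \<in> U" "dominated_in U E u" "dismantlable (U - {u}) E"
  shows "dismantlable U E"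
proof -
  obtain xs where xs: "distinct xs" "set xs = U - {u}"
    "\<And>i. i + 1 < length xs \<Longrightarrow> dominated_in (set (drop i xs)) E (xs ! i)"
    using assms(3) unfolding dismantlable_def by blast
  have set_xs: "set (u # xs) = U" using xs(2) assms(1) by auto
  have "dominated_in (set (drop i (u # xs))) E ((u # xs) ! i)" if "i + 1 < length (u # xs)" for i
  proof (cases i)
    case 0
    then show ?thesis using assms(2) set_xs by simp
  next
    case (Suc k)
    then show ?thesis using xs(3)[of k] that by simp
  qed
  moreover have "finite U" using assms(3) unfolding dismantlable_def by simp
  moreover have "distinct (u # xs)" using xs(1,2) by simp
  ultimately show ?thesis unfolding dismantlable_def using set_xs by blast
qed

section \<open>Geodesics in the Cayley graph\<close>

lemma symp_cay_adj: "symp (cay_adj G S)"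
  unfolding cay_adj_def by (rule sympI) auto

lemma wdist_sym: "wdist G S x y = wdist G S y x"
  unfolding wdist_def by (rule gdist_sym[OF symp_cay_adj])

lemma wdist_refl: "wdist G S x x = 0"
  unfolding wdist_def by (rule gdist_refl)

lemma walk_cay_adj_carrier: "walk (cay_adj G S) p n \<Longrightarrow> p 0 \<in> carrier G \<Longrightarrow> i \<le> n \<Longrightarrow> p i \<in> carrier G"
  by (induction i) (auto simp: walk_def cay_adj_def)

lemma cgeod_eq_end: "cgeod G S p l \<Longrightarrow> l \<le> i \<Longrightarrow> p i = p l"
  unfolding cgeod_def by blast

lemma cgeodD:
  assumes "cgeod G S p l"
  shows "walk (cay_adj G S) p l" "p 0 \<in> carrier G" "wdist G S (p 0) (p l) = l"
  using assms unfolding cgeod_def by blast+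

lemma cgeod_carrier:
  assumes "cgeod G S p l"
  shows "p i \<in> carrier G"
proof (cases "i \<le> l")
  case True
  then show ?thesis using walk_cay_adj_carrier[OF cgeodD(1,2)[OF assms]] by blast
next
  case False
  then show ?thesis
    using walk_cay_adj_carrier[OF cgeodD(1,2)[OF assms] le_refl] cgeod_eq_end[OF assms, of i] by simp
qed

lemma cgeod_wdist_le:
  assumes "cgeod G S p l" "i \<le> j"
  shows "wdist G S (p i) (p j) \<le> j - i"
proof -
  have w: "walk (cay_adj G S) p l" using cgeodD(1)[OF assms(1)] .
  have "p i = p (min i l)" "p j = p (min j l)"
    using cgeod_eq_end[OF assms(1), of i] cgeod_eq_end[OF assms(1), of j] by (auto simp: min_def)
  moreover have "wdist G S (p (min i l)) (p (min j l)) \<le> min j l - min i l"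
    unfolding wdist_def using walk_gdist_segment_le[OF w] assms(2) by simp
  ultimately show ?thesis by simp
qed

lemma xdist_le_wdist: "g \<in> elts u \<Longrightarrow> h \<in> elts v \<Longrightarrow> xdist G S u v \<le> wdist G S g h"
  unfolding xdist_def by (rule cINF_lower[where f = "\<lambda>gh. wdist G S (fst gh) (snd gh)" and x = "(g, h)", simplified]) auto

lemma xdist_attained:
  assumes "elts u \<noteq> {}" "elts v \<noteq> {}"
  obtains g h where "g \<in> elts u" "h \<in> elts v" "xdist G S u v = wdist G S g h"
proof -
  have "xdist G S u v \<in> (\<lambda>gh. wdist G S (fst gh) (snd gh)) ` (elts u \<times> elts v)"
    unfolding xdist_def by (rule Inf_nat_def1) (use assms in auto)
  then show ?thesis using that by force
qed

lemma xdist_le_flip: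
  assumes "elts u \<noteq> {}" "elts v \<noteq> {}"
  shows "xdist G S u v \<le> xdist G S v u"
proof -
  obtain h g where "h \<in> elts v" "g \<in> elts u" "xdist G S v u = wdist G S h g"
    using xdist_attained[OF assms(2,1)] .
  then show ?thesis using xdist_le_wdist[of g u h v G S] wdist_sym[of G S h g] by simp
qed

lemma xdist_sym: "elts u \<noteq> {} \<Longrightarrow> elts v \<noteq> {} \<Longrightarrow> xdist G S u v = xdist G S v u"
  by (intro antisym xdist_le_flip)

lemma xdist_self:
  assumes "g \<in> elts u"
  shows "xdist G S u u = 0"
  using xdist_le_wdist[OF assms assms, of G S] by (simp add: wdist_refl)

lemma geod_from_to_cgeod: "geod_from_to G S a c p l \<Longrightarrow> cgeod G S p l"
  unfolding geod_from_to_def by blast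

section \<open>Distances and geodesics in \<open>V \<union> W\<close>\<close>

locale cayley_peripheral =
  fixes G :: "('a, 'b) monoid_scheme" (structure) and S :: "'a set" and Ps :: "'a set set"
  assumes is_group: "group G" and generators_closed: "S \<subseteq> carrier G"
    and generates: "generate G S = carrier G" and peripheral_subgroups: "\<forall>H\<in>Ps. subgroup H G"
begin

sublocale group G by (fact is_group)

lemma reachable_mult_generator:
  assumes "g \<in> carrier G" "s \<in> S" "h = g \<otimes> s \<or> g = h \<otimes> s" "h \<in> carrier G"
  shows "reachable (cay_adj G S) g h"
proof (cases "g = h")
  case False
  then have "cay_adj G S g h" unfolding cay_adj_def using assms by blast
  then show ?thesis by (rule reachable_edge)
qed (simp add: reachable_refl)

lemma reachable_mult_generated:
  assumes "k \<in> generate G S" "g \<in> carrier G"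
  shows "reachable (cay_adj G S) g (g \<otimes> k)"
  using assms
proof (induction k arbitrary: g rule: generate.induct)
  case one
  then show ?case by (simp add: reachable_refl)
next
  case (incl s)
  then show ?case using generators_closed by (intro reachable_mult_generator) auto
next
  case (inv s)
  then have "s \<in> carrier G" using generators_closed by auto
  then show ?case using inv by (intro reachable_mult_generator[of _ s]) (auto simp: m_assoc)
next
  case (eng h1 h2)
  have h1: "h1 \<in> carrier G" and h2: "h2 \<in> carrier G"
    using eng.hyps generate_in_carrier generators_closed by auto
  have "reachable (cay_adj G S) g (g \<otimes> h1)" using eng.IH(1) eng.prems .
  moreover have "reachable (cay_adj G S) (g \<otimes> h1) (g \<otimes> h1 \<otimes> h2)"
    using eng.IH(2) eng.prems h1 by simp
  ultimately have "reachable (cay_adj G S) g (g \<otimes> h1 \<otimes> h2)" by (rule reachable_trans)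
  then show ?case using eng.prems h1 h2 by (simp add: m_assoc)
qed

lemma reachable_cayley: "g \<in> carrier G \<Longrightarrow> h \<in> carrier G \<Longrightarrow> reachable (cay_adj G S) g h"
  using reachable_mult_generated[of "inv g \<otimes> h" g] generates by (simp add: m_assoc[symmetric])

lemma wdist_triangle:
  "x \<in> carrier G \<Longrightarrow> y \<in> carrier G \<Longrightarrow> z \<in> carrier G \<Longrightarrow> wdist G S x z \<le> wdist G S x y + wdist G S y z"
  unfolding wdist_def by (intro gdist_triangle reachable_cayley)

lemma elts_VW:
  assumes "u \<in> VW G Ps"
  shows "elts u \<subseteq> carrier G" "elts u \<noteq> {}"
proof -
  have "elts u \<subseteq> carrier G \<and> elts u \<noteq> {}"
  proof (cases u)
    case (Inr w)
    then obtain g H where w: "w = g <# H" and g: "g \<in> carrier G" and H: "subgroup H G"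
      using assms peripheral_subgroups by (auto simp: VW_def cosetsW_def)
    have "g \<otimes> \<one> \<in> g <# H" unfolding l_coset_def using subgroup.one_closed[OF H] by blast
    then have "g \<in> w" using w g by simp
    moreover have "w \<subseteq> carrier G" using l_coset_subset_G[OF subgroup.subset[OF H] g] w by simp
    ultimately show ?thesis using Inr by auto
  qed (use assms in \<open>auto simp: VW_def\<close>)
  then show "elts u \<subseteq> carrier G" "elts u \<noteq> {}" by auto
qed

lemma Inl_in_VW: "g \<in> carrier G \<Longrightarrow> Inl g \<in> VW G Ps"
  unfolding VW_def by auto

lemma Inr_in_VW: "w \<in> cosetsW G Ps \<Longrightarrow> Inr w \<in> VW G Ps"
  unfolding VW_def by auto

lemma xdist_sym_VW: "u \<in> VW G Ps \<Longrightarrow> v \<in> VW G Ps \<Longrightarrow> xdist G S u v = xdist G S v u"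
  using xdist_sym[OF elts_VW(2) elts_VW(2)] by blast

lemma xdist_triangle_Inl:
  assumes "u \<in> VW G Ps" "g \<in> carrier G" "h \<in> elts v" "h \<in> carrier G"
  shows "xdist G S u v \<le> xdist G S u (Inl g) + wdist G S g h"
proof -
  obtain k h' where k: "k \<in> elts u" "h' \<in> elts (Inl g)" "xdist G S u (Inl g) = wdist G S k h'"
    by (rule xdist_attained[where G = G and S = S and u = u and v = "Inl g"])
      (use elts_VW(2)[OF assms(1)] in auto)
  have "xdist G S u v \<le> wdist G S k h" using xdist_le_wdist k(1) assms(3) .
  also have "\<dots> \<le> wdist G S k g + wdist G S g h"
    using wdist_triangle k(1) elts_VW(1)[OF assms(1)] assms(2,4) by blast
  finally show ?thesis using k(2,3) by simp
qed

lemma xdist_geod_start_le: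
  assumes "u \<in> VW G Ps" "geod_from_to G S a c p l"
  shows "xdist G S u a \<le> xdist G S u (Inl (p i)) + i"
proof -
  have p: "cgeod G S p l" "p 0 \<in> elts a" using assms(2) unfolding geod_from_to_def by auto
  have "wdist G S (p i) (p 0) \<le> i" using cgeod_wdist_le[OF p(1), of 0 i] wdist_sym[of G S "p i"] by simp
  then show ?thesis
    using xdist_triangle_Inl[OF assms(1) cgeod_carrier[OF p(1), of i] p(2) cgeod_carrier[OF p(1), of 0]]
    by linarith
qed

lemma xdist_geod_end_le:
  assumes "u \<in> VW G Ps" "geod_from_to G S a c p l"
  shows "xdist G S u c \<le> xdist G S u (Inl (p i)) + (l - i)"
proof -
  have p: "cgeod G S p l" "p l \<in> elts c" using assms(2) unfolding geod_from_to_def by auto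
  have "wdist G S (p i) (p l) \<le> l - i"
    using cgeod_wdist_le[OF p(1), of i l] cgeod_eq_end[OF p(1), of i] wdist_refl
    by (cases "i \<le> l") auto
  then show ?thesis
    using xdist_triangle_Inl[OF assms(1) cgeod_carrier[OF p(1), of i] p(2) cgeod_carrier[OF p(1), of l]]
    by linarith
qed

lemma geodesic_exists:
  assumes "a \<in> VW G Ps" "c \<in> VW G Ps"
  obtains p where "geod_from_to G S a c p (xdist G S a c)"
proof -
  obtain g h where gh: "g \<in> elts a" "h \<in> elts c" "xdist G S a c = wdist G S g h"
    by (rule xdist_attained[OF elts_VW(2)[OF assms(1)] elts_VW(2)[OF assms(2)]])
  define l where "l = wdist G S g h"
  obtain p where p: "walk (cay_adj G S) p l" "p 0 = g" "p l = h"
    using gdist_walk[OF reachable_cayley] gh elts_VW(1) assms unfolding l_def wdist_def by blast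
  have "walk (cay_adj G S) (\<lambda>i. p (min i l)) l" using p(1) unfolding walk_def by simp
  then have "geod_from_to G S a c (\<lambda>i. p (min i l)) l"
    using p gh elts_VW(1)[OF assms(1)] unfolding geod_from_to_def cgeod_def l_def by auto
  then show ?thesis using that gh(3) l_def by simp
qed

lemma geodesic_reverse:
  assumes "geod_from_to G S a c p l" "a \<in> VW G Ps" "c \<in> VW G Ps"
  shows "geod_from_to G S c a (\<lambda>k. p (l - k)) l"
proof -
  have p: "cgeod G S p l" "l = xdist G S a c" "p 0 \<in> elts a" "p l \<in> elts c"
    using assms(1) unfolding geod_from_to_def by auto
  have "walk (cay_adj G S) (\<lambda>k. p (l - k)) l" using walk_reverse[OF symp_cay_adj cgeodD(1)[OF p(1)]] .
  then have "cgeod G S (\<lambda>k. p (l - k)) l"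
    unfolding cgeod_def using cgeod_carrier[OF p(1)] cgeodD(3)[OF p(1)] wdist_sym[of G S "p l" "p 0"] by simp
  then show ?thesis unfolding geod_from_to_def using p xdist_sym_VW[OF assms(2,3)] by simp
qed

end

section \<open>The thin point of a geodesic triangle\<close>

text \<open>The vertex \<open>z\<close> of the thin-triangle condition: the coset in which \<open>p\<^sub>i\<close> is deep, if there
  is one, and \<open>p\<^sub>i\<close> itself otherwise.\<close>
definition thin_point ::
    "('a, 'b) monoid_scheme \<Rightarrow> 'a set \<Rightarrow> 'a set set \<Rightarrow> nat \<Rightarrow> nat \<Rightarrow> (nat \<Rightarrow> 'a) \<Rightarrow> nat \<Rightarrow> nat \<Rightarrow> 'a + 'a set"
  where "thin_point G S Ps \<epsilon> R p l i =
    (if \<exists>w \<in> cosetsW G Ps. deep G S \<epsilon> R p l i w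
     then Inr (SOME w. w \<in> cosetsW G Ps \<and> deep G S \<epsilon> R p l i w) else Inl (p i))"

lemma thin_point_cases:
  obtains "thin_point G S Ps \<epsilon> R p l i = Inl (p i)" "\<nexists>w. w \<in> cosetsW G Ps \<and> deep G S \<epsilon> R p l i w"
  | w where "w \<in> cosetsW G Ps" "deep G S \<epsilon> R p l i w" "thin_point G S Ps \<epsilon> R p l i = Inr w"
proof (cases "\<exists>w. w \<in> cosetsW G Ps \<and> deep G S \<epsilon> R p l i w")
  case True
  then have "thin_point G S Ps \<epsilon> R p l i = Inr (SOME w. w \<in> cosetsW G Ps \<and> deep G S \<epsilon> R p l i w)"
    unfolding thin_point_def by auto
  with someI_ex[OF True] show ?thesis using that(2) by blast
next
  case False
  then show ?thesis using that(1) unfolding thin_point_def by auto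
qed

lemma thin_triangle_constants_bounds: "thin_triangle_constants G S Ps \<epsilon> R D \<Longrightarrow> 0 < D \<and> \<epsilon> \<le> D"
  unfolding thin_triangle_constants_def by (elim conjE) (intro conjI)

lemma thin_triangle_thin_point:
  assumes "thin_triangle_constants G S Ps \<epsilon> R D"
    and "a \<in> VW G Ps" "b \<in> VW G Ps" "c \<in> VW G Ps" "a \<noteq> b"
    and "geod_from_to G S a b pab lab" "geod_from_to G S b c pbc lbc" "geod_from_to G S a c pac lac"
    and "i \<le> lab"
  shows "xdist G S (thin_point G S Ps \<epsilon> R pab lab i) (Inl (pac i)) \<le> D \<or>
    xdist G S (thin_point G S Ps \<epsilon> R pab lab i) (Inl (pbc (lab - i))) \<le> D"
proof -
  note clause = assms(1)[unfolded thin_triangle_constants_def,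
      THEN conjunct2, THEN conjunct2, THEN conjunct2, THEN conjunct2, THEN conjunct2]
  have thin: "(\<forall>w\<in>cosetsW G Ps. deep G S \<epsilon> R pab lab i w \<longrightarrow>
       xdist G S (Inr w) (Inl (pac i)) \<le> D \<or> xdist G S (Inr w) (Inl (pbc (lab - i))) \<le> D) \<and>
    ((\<nexists>w. w \<in> cosetsW G Ps \<and> deep G S \<epsilon> R pab lab i w) \<longrightarrow>
       xdist G S (Inl (pab i)) (Inl (pac i)) \<le> D \<or> xdist G S (Inl (pab i)) (Inl (pbc (lab - i))) \<le> D)"
    using clause assms(2-9) by blast
  show ?thesis
  proof (cases rule: thin_point_cases[of G S Ps \<epsilon> R pab lab i])
    case 1
    then show ?thesis using thin by auto
  next
    case (2 w)
    then show ?thesis using thin by auto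
  qed
qed

context cayley_peripheral
begin

lemma thin_point_in_VW: "cgeod G S p l \<Longrightarrow> thin_point G S Ps \<epsilon> R p l i \<in> VW G Ps"
  by (cases rule: thin_point_cases[of G S Ps \<epsilon> R p l i]) (auto intro: Inl_in_VW Inr_in_VW cgeod_carrier)

lemma xdist_thin_point_le:
  assumes "cgeod G S p l"
  shows "xdist G S (thin_point G S Ps \<epsilon> R p l i) (Inl (p i)) \<le> \<epsilon>"
proof (cases rule: thin_point_cases[of G S Ps \<epsilon> R p l i])
  case 1
  then show ?thesis using xdist_self[of "p i" "Inl (p i)" G S] by simp
next
  case (2 w)
  then have "xdist G S (Inl (p i)) (Inr w) \<le> \<epsilon>" unfolding deep_def by simp
  then show ?thesis
    using 2 xdist_sym_VW[OF Inr_in_VW Inl_in_VW[OF cgeod_carrier[OF assms]]] by simp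
qed

section \<open>Dismantling convex sets\<close>

lemma convex_wrt_base: "convex_wrt G S Ps \<epsilon> \<nu> U b \<Longrightarrow> b \<in> U"
  unfolding convex_wrt_def by (rule conjunct1)

lemma convex_wrt_geodD:
  assumes "convex_wrt G S Ps \<epsilon> \<nu> U b" "u \<in> U" "geod_from_to G S b u p l" "j + \<nu> \<le> l"
  shows "Inl (p j) \<in> U"
    and "w \<in> cosetsW G Ps \<Longrightarrow> xdist G S (Inr w) (Inl (p j)) \<le> \<epsilon> \<Longrightarrow> Inr w \<in> U"
  using assms unfolding convex_wrt_def by blast+

lemma convex_wrt_thin_point_mem:
  assumes "convex_wrt G S Ps \<epsilon> \<nu> U b" "u \<in> U" "geod_from_to G S b u p l" "j + \<nu> \<le> l"
    and "cgeod G S q m" "q i = p j"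
  shows "thin_point G S Ps \<epsilon> R q m i \<in> U"
proof (cases rule: thin_point_cases[of G S Ps \<epsilon> R q m i])
  case 1
  then show ?thesis using convex_wrt_geodD(1)[OF assms(1-4)] assms(6) by simp
next
  case (2 w)
  then show ?thesis
    using convex_wrt_geodD(2)[OF assms(1-4)] xdist_thin_point_le[OF assms(5), of \<epsilon> R i] assms(6) by simp
qed

lemma dominated_by_base:
  assumes "U \<subseteq> VW G Ps" "b \<in> U" "u \<in> U" "u \<noteq> b"
    and farthest: "\<forall>x\<in>U. xdist G S b x \<le> xdist G S b u" and "xdist G S b u \<le> n"
  shows "dominated_in U (rips_adj G S n) u"
proof -
  have "xdist G S u b = xdist G S b u" using assms(1-3) xdist_sym_VW by blast
  then have "rips_adj G S n u b" using assms(4,6) unfolding rips_adj_def by simp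
  moreover have "rips_adj G S n b x" if "x \<in> U" "x \<noteq> b" for x
    using that farthest assms(6) unfolding rips_adj_def by fastforce
  ultimately show ?thesis unfolding dominated_in_def using assms(2,4) by (intro bexI[of _ b]) auto
qed

lemma dominated_by_thin_point:
  assumes thin: "thin_triangle_constants G S Ps \<epsilon> R D" and "7 * D \<le> n"
    and U: "U \<subseteq> VW G Ps" "convex_wrt G S Ps \<epsilon> (6 * D) U b" "u \<in> U" "u \<noteq> b"
    and farthest: "\<forall>x\<in>U. xdist G S b x \<le> xdist G S b u" and far: "n < xdist G S b u"
  shows "dominated_in U (rips_adj G S n) u"
proof -
  have "0 < D" "\<epsilon> \<le> D" using thin_triangle_constants_bounds[OF thin] by auto
  have bV: "b \<in> VW G Ps" and uV: "u \<in> VW G Ps" using U convex_wrt_base[OF U(2)] by auto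
  define L where "L = xdist G S b u"
  have "6 * D \<le> L" using far \<open>7 * D \<le> n\<close> unfolding L_def by linarith
  obtain p where p: "geod_from_to G S b u p L" using geodesic_exists[OF bV uV] unfolding L_def .
  define q where "q k = p (L - k)" for k
  have q: "geod_from_to G S u b q L" unfolding q_def using geodesic_reverse[OF p bV uV] .
  define z where "z = thin_point G S Ps \<epsilon> R q L (6 * D)"
  have zU: "z \<in> U" unfolding z_def
    by (rule convex_wrt_thin_point_mem[where j = "L - 6 * D", OF U(2,3) p _ geod_from_to_cgeod[OF q]])
      (use \<open>6 * D \<le> L\<close> in \<open>simp_all add: q_def\<close>)
  have zV: "z \<in> VW G Ps" and z_near: "xdist G S z (Inl (q (6 * D))) \<le> \<epsilon>"
    unfolding z_def using thin_point_in_VW xdist_thin_point_le geod_from_to_cgeod[OF q] by auto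
  have "xdist G S z b \<le> \<epsilon> + (L - 6 * D)"
    using xdist_geod_end_le[OF zV q, of "6 * D"] z_near by linarith
  then have "z \<noteq> u"
    using xdist_sym_VW[OF bV uV] \<open>0 < D\<close> \<open>\<epsilon> \<le> D\<close> \<open>6 * D \<le> L\<close> unfolding L_def by auto
  have "xdist G S z u \<le> \<epsilon> + 6 * D" using xdist_geod_start_le[OF zV q, of "6 * D"] z_near by linarith
  then have u_z: "rips_adj G S n u z"
    using \<open>z \<noteq> u\<close> xdist_sym_VW[OF zV uV] \<open>\<epsilon> \<le> D\<close> \<open>7 * D \<le> n\<close> unfolding rips_adj_def by auto
  have z_x: "rips_adj G S n z x" if x: "x \<in> U" "rips_adj G S n u x" "x \<noteq> z" for x
  proof -
    have xV: "x \<in> VW G Ps" using x U by auto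
    obtain r where r: "geod_from_to G S b x r (xdist G S b x)" using geodesic_exists[OF bV xV] .
    obtain s where s: "geod_from_to G S u x s (xdist G S u x)" using geodesic_exists[OF uV xV] .
    have "xdist G S u x \<le> n" "xdist G S b x \<le> L"
      using x farthest unfolding rips_adj_def L_def by auto
    have "xdist G S z x \<le> n" if "xdist G S z (Inl (s (6 * D))) \<le> D"
      using xdist_geod_end_le[OF zV s, of "6 * D"] that \<open>xdist G S u x \<le> n\<close> \<open>7 * D \<le> n\<close> by linarith
    moreover have "xdist G S z x \<le> n" if "xdist G S z (Inl (r (L - 6 * D))) \<le> D"
      using xdist_geod_end_le[OF zV r, of "L - 6 * D"] that \<open>xdist G S b x \<le> L\<close> \<open>7 * D \<le> n\<close> by linarith
    moreover have "xdist G S z (Inl (s (6 * D))) \<le> D \<or> xdist G S z (Inl (r (L - 6 * D))) \<le> D"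
      unfolding z_def
      using thin_triangle_thin_point[OF thin uV bV xV \<open>u \<noteq> b\<close> q r s, where i = "6 * D"] \<open>6 * D \<le> L\<close>
      by simp
    ultimately have "xdist G S z x \<le> n" by blast
    then show ?thesis using x(3) unfolding rips_adj_def by simp
  qed
  show ?thesis unfolding dominated_in_def using zU u_z \<open>z \<noteq> u\<close> z_x by (intro bexI[of _ z]) auto
qed

lemma convex_wrt_remove_farthest:
  assumes "\<epsilon> < \<nu>" "U \<subseteq> VW G Ps" "convex_wrt G S Ps \<epsilon> \<nu> U b" "u \<in> U" "u \<noteq> b"
    and farthest: "\<forall>x\<in>U. xdist G S b x \<le> xdist G S b u"
  shows "convex_wrt G S Ps \<epsilon> \<nu> (U - {u}) b"
proof -
  have bV: "b \<in> VW G Ps" using assms(2) convex_wrt_base[OF assms(3)] by auto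
  have "Inl (p j) \<in> U - {u} \<and>
      (\<forall>w\<in>cosetsW G Ps. xdist G S (Inr w) (Inl (p j)) \<le> \<epsilon> \<longrightarrow> Inr w \<in> U - {u})"
    if u': "u' \<in> U - {u}" and p: "geod_from_to G S b u' p l" and j: "j + \<nu> \<le> l" for u' p l j
  proof -
    have "l = xdist G S b u'" using p unfolding geod_from_to_def by blast
    then have "l \<le> xdist G S b u" using farthest u' by simp
    have pjU: "Inl (p j) \<in> U" using convex_wrt_geodD(1)[OF assms(3) _ p j] u' by blast
    then have pjV: "Inl (p j) \<in> VW G Ps" using assms(2) by auto
    have "xdist G S (Inl (p j)) b \<le> j"
      using xdist_geod_start_le[OF pjV p, of j] xdist_self[of "p j" "Inl (p j)" G S] by simp
    then have "Inl (p j) \<noteq> u"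
      using xdist_sym_VW[OF pjV bV] \<open>l \<le> xdist G S b u\<close> j assms(1) by auto
    moreover have "Inr w \<in> U - {u}" if w: "w \<in> cosetsW G Ps" "xdist G S (Inr w) (Inl (p j)) \<le> \<epsilon>" for w
    proof -
      have "xdist G S (Inr w) b \<le> \<epsilon> + j"
        using xdist_geod_start_le[OF Inr_in_VW[OF w(1)] p, of j] w(2) by linarith
      then have "Inr w \<noteq> u"
        using xdist_sym_VW[OF Inr_in_VW[OF w(1)] bV] \<open>l \<le> xdist G S b u\<close> j assms(1) by auto
      then show ?thesis using convex_wrt_geodD(2)[OF assms(3) _ p j w] u' by blast
    qed
    ultimately show ?thesis using pjU by blast
  qed
  moreover have "b \<in> U - {u}" using convex_wrt_base[OF assms(3)] assms(5) by blast
  ultimately show ?thesis unfolding convex_wrt_def by blast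
qed

lemma farthest_exists:
  assumes "finite U" "b \<in> U" "U \<noteq> {b}" "U \<subseteq> VW G Ps"
  obtains u where "u \<in> U" "u \<noteq> b" "\<forall>x\<in>U. xdist G S b x \<le> xdist G S b u"
proof -
  have "U - {b} \<noteq> {}" using assms(2,3) by blast
  then obtain u where u: "u \<in> U - {b}" "Max (xdist G S b ` (U - {b})) = xdist G S b u"
    using obtains_MAX[of "U - {b}" "xdist G S b"] assms(1) by blast
  have "xdist G S b x \<le> xdist G S b u" if "x \<in> U" for x
  proof (cases "x = b")
    case True
    obtain g where "g \<in> elts b" using elts_VW(2) assms(2,4) by blast
    then show ?thesis using xdist_self[of g b G S] True by simp
  next
    case False
    then have "xdist G S b x \<le> Max (xdist G S b ` (U - {b}))"
      using that assms(1) by (intro Max_ge) auto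
    then show ?thesis using u(2) by simp
  qed
  then show ?thesis using that u(1) by blast
qed

lemma dismantlable_convex:
  assumes thin: "thin_triangle_constants G S Ps \<epsilon> R D" and "7 * D \<le> n" and "finite U"
  shows "U \<subseteq> VW G Ps \<Longrightarrow> convex_wrt G S Ps \<epsilon> (6 * D) U b \<Longrightarrow> dismantlable U (rips_adj G S n)"
  using \<open>finite U\<close>
proof (induction U rule: finite_remove_induct)
  case empty
  then show ?case using convex_wrt_base by blast
next
  case (remove U)
  have "b \<in> U" using convex_wrt_base[OF remove.prems(2)] .
  show ?case
  proof (cases "U = {b}")
    case False
    obtain u where u: "u \<in> U" "u \<noteq> b" "\<forall>x\<in>U. xdist G S b x \<le> xdist G S b u"
      using farthest_exists[OF remove.hyps(1) \<open>b \<in> U\<close> False remove.prems(1)] .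
    have "\<epsilon> < 6 * D" using thin_triangle_constants_bounds[OF thin] by linarith
    then have "convex_wrt G S Ps \<epsilon> (6 * D) (U - {u}) b"
      using convex_wrt_remove_farthest[OF _ remove.prems(1,2) u] by blast
    then have "dismantlable (U - {u}) (rips_adj G S n)"
      using remove.IH[OF u(1)] remove.prems(1) by blast
    moreover have "dominated_in U (rips_adj G S n) u"
    proof (cases "xdist G S b u \<le> n")
      case True
      then show ?thesis using dominated_by_base[OF remove.prems(1) \<open>b \<in> U\<close> u] by blast
    next
      case False
      then show ?thesis
        using dominated_by_thin_point[OF thin \<open>7 * D \<le> n\<close> remove.prems(1,2) u] by simp
    qed
    ultimately show ?thesis by (intro dismantlable_remove_dominated[OF u(1)])
  qed (simp add: dismantlable_singleton)
qed

end

theorem lemma3p13: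
  fixes G :: "('a, 'b) monoid_scheme" and S :: "'a set" and Ps :: "'a set set"
    and \<epsilon> R D n :: nat and U :: "('a + 'a set) set" and b :: "'a + 'a set"
  assumes "group G"
    and "finite S" and "S \<subseteq> carrier G" and "generate G S = carrier G"
    and "finite Ps" and "\<forall>H\<in>Ps. subgroup H G"
    and "rel_hyperbolic G S Ps"
    and "thin_triangle_constants G S Ps \<epsilon> R D"
    and "finite U" and "U \<subseteq> VW G Ps" and "b \<in> U"
    and "convex_wrt G S Ps \<epsilon> (6 * D) U b"
    and "n \<ge> 7 * D"
  shows "dismantlable U (rips_adj G S n)"
proof -
  interpret cayley_peripheral G S Ps
    using assms(1,3,4,6) by (simp add: cayley_peripheral_def)
  show ?thesis using dismantlable_convex[OF assms(8,13,9,10,12)] .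
qed

end
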